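(* Let $X=(X_k)$ be a sequence of fuzzy numbers, $0<\beta\le1$, $m\ge0$ an integer, and $\theta=(k_r)$ a lacunary sequence. If $\limsup_r q_r<\infty$, then $S_\theta^\beta(F,\Delta^m)\subset S(F,\Delta^m)$.
   Context: A fuzzy number is a map $X:\mathbb{R}\to[0,1]$ which is normal, fuzzy convex, upper semicontinuous, with compact closure of $\{t:X(t)>0\}$; $L(\mathbb{R})$ is the set of fuzzy numbers. Level sets $[X]^\alpha=\{t:X(t)\ge\alpha\}$ ($\alpha\in(0,1]$), $[X]^0=\overline{\{t:X(t)>0\}}$, are compact intervals $[u^\alpha,v^\alpha]$. Subtraction: $[X-Y]^\alpha=[u_1^\alpha-v_2^\alpha,v_1^\alpha-u_2^\alpha]$. Metric: $d(X,Y)=\sup_{\alpha\in[0,1]}\max\{|u_1^\alpha-u_2^\alpha|,|v_1^\alpha-v_2^\alpha|\}$. $(\Delta^0X)_k=X_k$, $(\Delta^1X)_k=X_k-X_{k+1}$, $(\Delta^mX)_k=(\Delta^1(\Delta^{m-1}X))_k$. A lacunary sequence is an increasing integer sequence $\theta=(k_r)_{r\ge0}$ with $k_0=0$, $h_r=k_r-k_{r-1}\to\infty$; $I_r=(k_{r-1},k_r]$, $q_r=k_r/k_{r-1}$. $S_\theta^\beta(F,\Delta^m)$: sequences $X$ with some $X_0\in L(\mathbb{R})$ such that for all $\varepsilon>0$, $\lim_r\frac{1}{h_r^\beta}|\{k\in I_r:d(\Delta^mX_k,X_0)\ge\varepsilon\}|=0$. $S(F,\Delta^m)$: sequences $X$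 with some $X_0\in L(\mathbb{R})$ such that for all $\varepsilon>0$, $\lim_{n\to\infty}\frac{1}{n}|\{k\le n:d(\Delta^mX_k,X_0)\ge\varepsilon\}|=0$. *)

theory Defs
  imports "HOL-Analysis.Analysis"
begin

type_synonym fuzzy = "real \<Rightarrow> real"

definition fuzzy_number :: "fuzzy \<Rightarrow> bool" where
  "fuzzy_number X \<longleftrightarrow>
     (\<forall>t. 0 \<le> X t \<and> X t \<le> 1) \<and>
     (\<exists>t. X t = 1) \<and>
     (\<forall>s t l. 0 \<le> l \<and> l \<le> 1 \<longrightarrow> min (X s) (X t) \<le> X (l * s + (1 - l) * t)) \<and>
     (\<forall>t a. X t < a \<longrightarrow> (\<exists>e>0. \<forall>s. \<bar>s - t\<bar> < e \<longrightarrow> X s < a)) \<and>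
     compact (closure {t. X t > 0})"

definition level :: "fuzzy \<Rightarrow> real \<Rightarrow> real set" where
  "level X a = (if a = 0 then closure {t. X t > 0} else {t. X t \<ge> a})"

definition flo :: "fuzzy \<Rightarrow> real \<Rightarrow> real" where
  "flo X a = Inf (level X a)"

definition fhi :: "fuzzy \<Rightarrow> real \<Rightarrow> real" where
  "fhi X a = Sup (level X a)"

text \<open>Subtraction defined through its level sets
  [X - Y]^a = [flo X a - fhi Y a, fhi X a - flo Y a]: the membership value at t
  is the largest level a in (0,1] whose prescribed level interval contains t.\<close>
definition fsub :: "fuzzy \<Rightarrow> fuzzy \<Rightarrow> fuzzy" where
  "fsub X Y = (\<lambda>t. let A = {a \<in> {0<..1}. flo X a - fhi Y a \<le> t \<and> t \<le> fhi X a - flo Y a}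
                  in if A = {} then 0 else Sup A)"

fun fdelta :: "nat \<Rightarrow> (nat \<Rightarrow> fuzzy) \<Rightarrow> nat \<Rightarrow> fuzzy" where
  "fdelta 0 X = X"
| "fdelta (Suc m) X = (\<lambda>k. fsub (fdelta m X k) (fdelta m X (Suc k)))"

definition fdist :: "fuzzy \<Rightarrow> fuzzy \<Rightarrow> real" where
  "fdist X Y = (SUP a\<in>{0..1}. max \<bar>flo X a - flo Y a\<bar> \<bar>fhi X a - fhi Y a\<bar>)"

definition lacunary :: "(nat \<Rightarrow> nat) \<Rightarrow> bool" where
  "lacunary \<theta> \<longleftrightarrow> \<theta> 0 = 0 \<and> strict_mono \<theta> \<and>
     filterlim (\<lambda>r. \<theta> r - \<theta> (r - 1)) at_top sequentially"

definition lac_h :: "(nat \<Rightarrow> nat) \<Rightarrow> nat \<Rightarrow> nat" where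
  "lac_h \<theta> r = \<theta> r - \<theta> (r - 1)"

definition lac_I :: "(nat \<Rightarrow> nat) \<Rightarrow> nat \<Rightarrow> nat set" where
  "lac_I \<theta> r = {\<theta> (r - 1)<..\<theta> r}"

definition lac_q :: "(nat \<Rightarrow> nat) \<Rightarrow> nat \<Rightarrow> real" where
  "lac_q \<theta> r = real (\<theta> r) / real (\<theta> (r - 1))"

definition S_theta :: "real \<Rightarrow> (nat \<Rightarrow> nat) \<Rightarrow> nat \<Rightarrow> (nat \<Rightarrow> fuzzy) set" where
  "S_theta \<beta> \<theta> m = {X. (\<forall>k. fuzzy_number (X k)) \<and>
     (\<exists>X0. fuzzy_number X0 \<and> (\<forall>\<epsilon>>0.
        (\<lambda>r. real (card {k \<in> lac_I \<theta> r. fdist (fdelta m X k) X0 \<ge> \<epsilon>}) / (real (lac_h \<theta> r) powr \<beta>))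
          \<longlonglongrightarrow> 0))}"

definition S_stat :: "nat \<Rightarrow> (nat \<Rightarrow> fuzzy) set" where
  "S_stat m = {X. (\<forall>k. fuzzy_number (X k)) \<and>
     (\<exists>X0. fuzzy_number X0 \<and> (\<forall>\<epsilon>>0.
        (\<lambda>n. real (card {k \<in> {1..n}. fdist (fdelta m X k) X0 \<ge> \<epsilon>}) / real n) \<longlonglongrightarrow> 0))}"

end

theory Submission
  imports Defs
begin

text \<open>Only the counting of the indices k with d(\<Delta>^m X_k, X_0) \<ge> \<epsilon> matters, so the statement is
  about densities of a set P of naturals. Since h_r^\<beta> \<le> h_r, a vanishing \<beta>-density on the
  blocks I_r gives a vanishing ordinary density on the blocks. By the Stolz-Cesaro argument
  the density of P in [1, k_r] then vanishes along r, and bounded ratios q_r let this pass to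
  all n: for k_(r-1) < n \<le> k_r the density of P in [1, n] is at most q_r times its density
  in [1, k_r].\<close>

lemma div_tendsto_zero_of_div_powr_tendsto_zero:
  fixes a h :: "nat \<Rightarrow> real"
  assumes "0 < \<beta>" "\<beta> \<le> 1" "\<And>r. 0 \<le> a r" "eventually (\<lambda>r. 1 \<le> h r) sequentially"
    and "(\<lambda>r. a r / h r powr \<beta>) \<longlonglongrightarrow> 0"
  shows "(\<lambda>r. a r / h r) \<longlonglongrightarrow> 0"
proof (rule tendsto_sandwich[OF _ _ tendsto_const assms(5)])
  show "eventually (\<lambda>r. 0 \<le> a r / h r) sequentially"
    using assms(4) by eventually_elim (simp add: assms(3))
  show "eventually (\<lambda>r. a r / h r \<le> a r / h r powr \<beta>) sequentially"
    using assms(4)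
  proof eventually_elim
    case (elim r)
    then have "h r powr \<beta> \<le> h r"
      using powr_mono[of \<beta> 1 "h r"] assms(2) by simp
    then show ?case
      using elim by (intro divide_left_mono) (auto simp: assms(3))
  qed
qed

lemma Stolz_Cesaro_zero:
  fixes A t :: "nat \<Rightarrow> real"
  assumes "strict_mono t" "filterlim t at_top sequentially"
    and "(\<lambda>r. (A (Suc r) - A r) / (t (Suc r) - t r)) \<longlonglongrightarrow> 0"
  shows "(\<lambda>r. A r / t r) \<longlonglongrightarrow> 0"
proof (unfold tendsto_iff, intro allI impI)
  fix e :: real assume "0 < e"
  have t_step: "0 < t (Suc j) - t j" for j
    using assms(1) by (simp add: strict_mono_Suc_iff)
  obtain R where R: "\<And>j. j \<ge> R \<Longrightarrow> \<bar>A (Suc j) - A j\<bar> \<le> e/2 * (t (Suc j) - t j)"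
  proof -
    obtain R where "\<forall>j\<ge>R. \<bar>(A (Suc j) - A j) / (t (Suc j) - t j)\<bar> < e/2"
      using LIMSEQ_D[OF assms(3), of "e/2"] \<open>0 < e\<close> by auto
    then show thesis
      using t_step by (intro that) (auto simp: abs_div_pos pos_divide_less_eq less_imp_le)
  qed
  have drift: "\<bar>A r - A R\<bar> \<le> e/2 * (t r - t R)" if "R \<le> r" for r
    using that
  proof (induction r rule: dec_induct)
    case (step n)
    have "\<bar>A (Suc n) - A R\<bar> \<le> \<bar>A (Suc n) - A n\<bar> + \<bar>A n - A R\<bar>" by linarith
    also have "\<dots> \<le> e/2 * (t (Suc n) - t n) + e/2 * (t n - t R)"
      using R[OF step.hyps(1)] step.IH by linarith
    also have "\<dots> = e/2 * (t (Suc n) - t R)" by argo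
    finally show ?case .
  qed simp
  define C where "C = \<bar>A R\<bar> + e/2 * \<bar>t R\<bar>"
  have "(\<lambda>r. C / t r) \<longlonglongrightarrow> 0"
    using assms(2) by (intro tendsto_divide_0[OF tendsto_const] filterlim_at_top_imp_at_infinity)
  then have "eventually (\<lambda>r. C / t r < e/2) sequentially"
    using \<open>0 < e\<close> by (intro order_tendstoD(2)) auto
  moreover have "eventually (\<lambda>r. 0 < t r) sequentially"
    using assms(2) by (simp add: filterlim_at_top_dense)
  ultimately show "eventually (\<lambda>r. dist (A r / t r) 0 < e) sequentially"
    using eventually_ge_at_top[of R]
  proof eventually_elim
    case (elim r)
    have "- (e/2 * t R) \<le> e/2 * \<bar>t R\<bar>"
      using mult_left_mono[OF abs_ge_minus_self[of "t R"], of "e/2"] \<open>0 < e\<close> by simp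
    then have "\<bar>A r\<bar> \<le> C + e/2 * t r"
      using drift[OF elim(3)] unfolding C_def by (simp add: right_diff_distrib)
    then have "\<bar>A r\<bar> / t r \<le> (C + e/2 * t r) / t r"
      using elim(2) by (intro divide_right_mono) auto
    also have "\<dots> = C / t r + e/2"
      using elim(2) by (simp add: add_divide_distrib)
    finally have "\<bar>A r\<bar> / t r \<le> C / t r + e/2" .
    moreover have "dist (A r / t r) 0 = \<bar>A r\<bar> / t r"
      using elim(2) by simp
    ultimately show ?case
      using elim(1) by linarith
  qed
qed

lemma density_tendsto_zero_of_subsequence:
  fixes F :: "nat \<Rightarrow> real" and \<theta> :: "nat \<Rightarrow> nat"
  assumes "mono F" "\<And>n. 0 \<le> F n" "strict_mono \<theta>"
    and "eventually (\<lambda>r. real (\<theta> r) \<le> M * real (\<theta> (r - 1))) sequentially"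
    and "(\<lambda>r. F (\<theta> r) / real (\<theta> r)) \<longlonglongrightarrow> 0"
  shows "(\<lambda>n. F n / real n) \<longlonglongrightarrow> 0"
proof -
  \<comment> \<open>\<rho> n is the index of the block \<theta> (r - 1) < n \<le> \<theta> r containing n\<close>
  define \<rho> where "\<rho> n = (LEAST r. n \<le> \<theta> r)" for n
  have upper: "n \<le> \<theta> (\<rho> n)" for n
    unfolding \<rho>_def by (rule LeastI[of _ n]) (rule seq_suble[OF assms(3)])
  have lower: "\<theta> (\<rho> n - 1) < n" if "0 < \<rho> n" for n
    using not_less_Least[of "\<rho> n - 1" "\<lambda>r. n \<le> \<theta> r"] that unfolding \<rho>_def by simp
  have \<rho>_lim: "filterlim \<rho> at_top sequentially"
    unfolding filterlim_at_top
  proof (intro allI eventually_sequentiallyI)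
    fix Z n assume "Suc (\<theta> Z) \<le> n"
    then show "Z \<le> \<rho> n"
      using upper[of n] strict_mono_less_eq[OF assms(3), of "\<rho> n" Z] by linarith
  qed
  have ratio: "eventually (\<lambda>n. 2 \<le> \<rho> n \<and> real (\<theta> (\<rho> n)) \<le> M * real (\<theta> (\<rho> n - 1))) sequentially"
    using eventually_conj[OF eventually_ge_at_top assms(4)]
    by (rule eventually_compose_filterlim) (rule \<rho>_lim)
  show ?thesis
  proof (rule tendsto_sandwich[OF _ _ tendsto_const])
    show "eventually (\<lambda>n. 0 \<le> F n / real n) sequentially"
      by (simp add: assms(2))
    show "(\<lambda>n. M * (F (\<theta> (\<rho> n)) / real (\<theta> (\<rho> n)))) \<longlonglongrightarrow> 0"
      using tendsto_mult_right_zero[OF filterlim_compose[OF assms(5) \<rho>_lim]]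
      by simp
    show "eventually (\<lambda>n. F n / real n \<le> M * (F (\<theta> (\<rho> n)) / real (\<theta> (\<rho> n)))) sequentially"
      using ratio
    proof eventually_elim
      case (elim n)
      define a b where "a = \<theta> (\<rho> n - 1)" and "b = \<theta> (\<rho> n)"
      have "0 < a"
        using strict_monoD[OF assms(3), of 0 "\<rho> n - 1"] elim unfolding a_def by simp
      have "a < n" "n \<le> b" "real b \<le> M * real a"
        using lower[of n] upper[of n] elim unfolding a_def b_def by auto
      have "F n / real n \<le> F b / real a"
        using \<open>0 < a\<close> \<open>a < n\<close> \<open>n \<le> b\<close> assms(2)[of b] monoD[OF assms(1) \<open>n \<le> b\<close>]
        by (intro frac_le) auto
      also have "\<dots> \<le> M * (F b / real b)"
      proof -
        have "F b * real b \<le> F b * (M * real a)"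
          using \<open>real b \<le> M * real a\<close> assms(2)[of b] by (rule mult_left_mono)
        then show ?thesis
          using \<open>0 < a\<close> \<open>a < n\<close> \<open>n \<le> b\<close> by (simp add: field_simps)
      qed
      finally show ?case unfolding b_def .
    qed
  qed
qed

lemma card_upto_lac_Suc:
  assumes "mono \<theta>"
  shows "card {k \<in> {1..\<theta> (Suc r)}. P k} = card {k \<in> {1..\<theta> r}. P k} + card {k \<in> lac_I \<theta> (Suc r). P k}"
proof -
  have "{k \<in> {1..\<theta> (Suc r)}. P k} = {k \<in> {1..\<theta> r}. P k} \<union> {k \<in> lac_I \<theta> (Suc r). P k}"
    using monoD[OF assms, of r "Suc r"] unfolding lac_I_def by auto
  then show ?thesis
    by (simp add: card_Un_disjoint lac_I_def disjoint_iff)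
qed

lemma lacunary_ratio_bounded:
  assumes "lacunary \<theta>" and "limsup (\<lambda>r. ereal (lac_q \<theta> r)) < \<infinity>"
  obtains M where "eventually (\<lambda>r. real (\<theta> r) \<le> M * real (\<theta> (r - 1))) sequentially"
proof -
  obtain M where "limsup (\<lambda>r. ereal (lac_q \<theta> r)) < ereal M"
    using ereal_dense2[OF assms(2)] by auto
  then have "eventually (\<lambda>r. lac_q \<theta> r < M) sequentially"
    using Limsup_lessD by fastforce
  then have "eventually (\<lambda>r. real (\<theta> r) \<le> M * real (\<theta> (r - 1))) sequentially"
    using eventually_ge_at_top[of 2]
  proof eventually_elim
    case (elim r)
    have "0 < \<theta> (r - 1)"
      using assms(1) strict_monoD[of \<theta> 0 "r - 1"] elim(2) unfolding lacunary_def by simp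
    with elim(1) show ?case
      by (simp add: lac_q_def pos_divide_less_eq)
  qed
  then show thesis ..
qed

lemma lacunary_density_tendsto_zero:
  assumes "lacunary \<theta>" "0 < \<beta>" "\<beta> \<le> 1" "limsup (\<lambda>r. ereal (lac_q \<theta> r)) < \<infinity>"
    and "(\<lambda>r. real (card {k \<in> lac_I \<theta> r. P k}) / real (lac_h \<theta> r) powr \<beta>) \<longlonglongrightarrow> 0"
  shows "(\<lambda>n. real (card {k \<in> {1..n}. P k}) / real n) \<longlonglongrightarrow> 0"
proof -
  have "strict_mono \<theta>"
    using assms(1) by (simp add: lacunary_def)
  define F where "F n = real (card {k \<in> {1..n}. P k})" for n
  have "eventually (\<lambda>r. 1 \<le> real (lac_h \<theta> r)) sequentially"
    using eventually_ge_at_top[of 1]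
    by eventually_elim (simp add: lac_h_def Suc_leI \<open>strict_mono \<theta>\<close> strict_mono_less)
  then have "(\<lambda>r. real (card {k \<in> lac_I \<theta> r. P k}) / real (lac_h \<theta> r)) \<longlonglongrightarrow> 0"
    using div_tendsto_zero_of_div_powr_tendsto_zero[OF assms(2,3) _ _ assms(5)] by simp
  then have "(\<lambda>r. real (card {k \<in> lac_I \<theta> (Suc r). P k}) / real (lac_h \<theta> (Suc r))) \<longlonglongrightarrow> 0"
    by (rule LIMSEQ_Suc)
  moreover have "F (\<theta> (Suc r)) - F (\<theta> r) = real (card {k \<in> lac_I \<theta> (Suc r). P k})" for r
    unfolding F_def card_upto_lac_Suc[OF strict_mono_mono[OF \<open>strict_mono \<theta>\<close>]] by simp
  moreover have "real (\<theta> (Suc r)) - real (\<theta> r) = real (lac_h \<theta> (Suc r))" for r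
    using strict_mono_leD[OF \<open>strict_mono \<theta>\<close>, of r "Suc r"] by (simp add: lac_h_def)
  ultimately have "(\<lambda>r. (F (\<theta> (Suc r)) - F (\<theta> r)) / (real (\<theta> (Suc r)) - real (\<theta> r))) \<longlonglongrightarrow> 0"
    by simp
  then have F_lim: "(\<lambda>r. F (\<theta> r) / real (\<theta> r)) \<longlonglongrightarrow> 0"
  proof (rule Stolz_Cesaro_zero[rotated 2])
    show "strict_mono (\<lambda>r. real (\<theta> r))"
      using \<open>strict_mono \<theta>\<close> by (simp add: strict_mono_def)
    show "filterlim (\<lambda>r. real (\<theta> r)) at_top sequentially"
      by (rule filterlim_compose[OF filterlim_real_sequentially filterlim_subseq[OF \<open>strict_mono \<theta>\<close>]])
  qed
  obtain M where M: "eventually (\<lambda>r. real (\<theta> r) \<le> M * real (\<theta> (r - 1))) sequentially"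
    using lacunary_ratio_bounded[OF assms(1,4)] .
  have "mono F"
    unfolding F_def by (intro monoI) (auto intro!: card_mono)
  have "(\<lambda>n. F n / real n) \<longlonglongrightarrow> 0"
    by (rule density_tendsto_zero_of_subsequence[OF \<open>mono F\<close> _ \<open>strict_mono \<theta>\<close> M F_lim])
      (simp add: F_def)
  then show ?thesis
    unfolding F_def .
qed

theorem theorem2p11:
  fixes \<beta> :: real and m :: nat and \<theta> :: "nat \<Rightarrow> nat"
  assumes "0 < \<beta>" and "\<beta> \<le> 1"
    and "lacunary \<theta>"
    and "limsup (\<lambda>r. ereal (lac_q \<theta> r)) < \<infinity>"
  shows "S_theta \<beta> \<theta> m \<subseteq> S_stat m"
proof
  fix X assume "X \<in> S_theta \<beta> \<theta> m"
  then obtain X0 where fuzzy: "\<forall>k. fuzzy_number (X k)" "fuzzy_number X0"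
    and lim: "\<And>\<epsilon>. \<epsilon> > 0 \<Longrightarrow> (\<lambda>r. real (card {k \<in> lac_I \<theta> r. fdist (fdelta m X k) X0 \<ge> \<epsilon>})
          / (real (lac_h \<theta> r) powr \<beta>)) \<longlonglongrightarrow> 0"
    unfolding S_theta_def by blast
  show "X \<in> S_stat m"
    unfolding S_stat_def
    by (intro CollectI conjI exI[of _ X0] fuzzy allI impI lacunary_density_tendsto_zero[OF assms(3,1,2,4) lim])
qed

end
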